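(* Let $\mathcal{U}=(u_1,\dots,u_n)$ be a complex projective 2-design consisting of $n$ unit-norm vectors in $\mathbb{C}^d$. For $1\le s\le n$, let $\xi_1,\dots,\xi_n$ be iid $\textsc{bernoulli}(s/n)$ random variables and form the random subsystem $\mathcal{U}'=(u_i:\xi_i=1)$. Let $\delta\in(0,1)$. If \[ s\ge 4\big[\sqrt d+\sqrt{\log(d/\delta)}\big]^2, \] then $\mathcal{U}'$ spans $\mathbb{C}^d$ with probability at least $1-\delta$.
   Context: A system $(u_1,\dots,u_n)$ of unit vectors in $\mathbb{C}^d$ is a complex projective 2-design if $\frac1n\sum_{i=1}^n|\langle a,u_i\rangle|^4=\mathbb{E}|\langle a,v\rangle|^4$ for every $a\in\mathbb{C}^d$, where $v$ is uniform on the complex unit sphere of $\mathbb{C}^d$; equivalently, $\frac1n\sum_{i=1}^n|\operatorname{Tr}[M u_iu_i^*]|^2=\frac{1}{d(d+1)}\big[\|M\|_F^2+(\operatorname{Tr}M)^2\big]$ for all self-adjoint $M\in\mathbb{C}^{d\times d}$. Here $\langle a,b\rangle=a^*b$. *)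

theory Defs
  imports "HOL-Analysis.Analysis" "HOL-Probability.Probability"
begin

text \<open>Vectors in C^d are complex ^ 'd, d = CARD('d). The system (u_1,...,u_n) is
  u :: nat => complex ^ 'd indexed by {..<n}.  Matrices are complex ^ 'd ^ 'd.\<close>

definition self_adjoint :: "complex ^ 'd ^ 'd \<Rightarrow> bool" where
  "self_adjoint M \<longleftrightarrow> (\<forall>i j. M $ i $ j = cnj (M $ j $ i))"

definition ctrace :: "complex ^ 'd ^ 'd \<Rightarrow> complex" where
  "ctrace M = (\<Sum>i\<in>UNIV. M $ i $ i)"

definition frob_sq :: "complex ^ 'd ^ 'd \<Rightarrow> real" where
  "frob_sq M = (\<Sum>i\<in>UNIV. \<Sum>j\<in>UNIV. (cmod (M $ i $ j))\<^sup>2)"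

definition outer :: "complex ^ 'd \<Rightarrow> complex ^ 'd ^ 'd" where
  "outer u = (\<chi> i j. u $ i * cnj (u $ j))"

text \<open>Complex projective 2-design (trace formulation from the paper's context):
  unit vectors with (1/n) sum |Tr[M u_i u_i^*]|^2 = (||M||_F^2 + (Tr M)^2)/(d(d+1))
  for all self-adjoint M.\<close>
definition proj_2design :: "nat \<Rightarrow> (nat \<Rightarrow> complex ^ 'd) \<Rightarrow> bool" where
  "proj_2design n u \<longleftrightarrow> n \<ge> 1 \<and> (\<forall>i<n. norm (u i) = 1) \<and>
     (\<forall>M :: complex ^ 'd ^ 'd. self_adjoint M \<longrightarrow>
        (1 / real n) * (\<Sum>i<n. (cmod (ctrace (M ** outer (u i))))\<^sup>2)
        = (frob_sq M + (Re (ctrace M))\<^sup>2) / (real CARD('d) * (real CARD('d) + 1)))"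

definition spans_Cd :: "(complex ^ 'd) set \<Rightarrow> bool" where
  "spans_Cd S \<longleftrightarrow> vec.span S = UNIV"

end

(*
  Suppose every proper subspace of C^d misses at least m of the vectors u_i. Reveal the
  Bernoulli selectors one at a time, always picking an unrevealed vector outside the span of
  those selected so far: it uses up one of the m escaping vectors, and if it is selected the
  codimension also drops. Induction gives failure probability at most 2^d (1 - p/2)^m.
  For a 2-design m >= n/2: testing the design identity against a a^* and I + a a^* yields the
  first two moments of |<a, u_i>|^2, and Cauchy-Schwarz shows that at least half of the u_i
  are not orthogonal to a given a /= 0. With p = s/n the failure probability is at most
  2^d exp(-s/4), which the hypothesis on s makes at most delta.
*)
theory Submission
  imports Defs
begin

section \<open>Revealing Bernoulli selectors\<close>

lemma prob_Pi_pmf_bernoulli_insert: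
  assumes "finite J" "i \<notin> J" "0 \<le> p" "p \<le> 1"
  shows "measure_pmf.prob (Pi_pmf (insert i J) False (\<lambda>_. bernoulli_pmf p)) E =
           p * measure_pmf.prob (Pi_pmf J False (\<lambda>_. bernoulli_pmf p)) ((\<lambda>\<xi>. \<xi>(i := True)) -` E)
         + (1 - p) * measure_pmf.prob (Pi_pmf J False (\<lambda>_. bernoulli_pmf p)) ((\<lambda>\<xi>. \<xi>(i := False)) -` E)"
proof -
  let ?Q = "Pi_pmf J False (\<lambda>_. bernoulli_pmf p)"
  have "Pi_pmf (insert i J) False (\<lambda>_. bernoulli_pmf p)
          = bind_pmf (bernoulli_pmf p) (\<lambda>b. map_pmf (\<lambda>\<xi>. \<xi>(i := b)) ?Q)"
    using assms by (subst Pi_pmf_insert') (auto simp: map_pmf_def)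
  then have "ennreal (measure_pmf.prob (Pi_pmf (insert i J) False (\<lambda>_. bernoulli_pmf p)) E)
      = ennreal (measure_pmf.prob ?Q ((\<lambda>\<xi>. \<xi>(i := True)) -` E)) * ennreal p
      + ennreal (measure_pmf.prob ?Q ((\<lambda>\<xi>. \<xi>(i := False)) -` E)) * ennreal (1 - p)"
    using assms by (simp add: measure_pmf.emeasure_eq_measure[symmetric])
  also have "\<dots> = ennreal (p * measure_pmf.prob ?Q ((\<lambda>\<xi>. \<xi>(i := True)) -` E)
      + (1 - p) * measure_pmf.prob ?Q ((\<lambda>\<xi>. \<xi>(i := False)) -` E))"
    using assms by (simp add: ennreal_mult' ennreal_plus mult.commute)
  finally show ?thesis
    using assms by (subst (asm) ennreal_inj) auto
qed

lemma prob_selected_insert: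
  fixes \<Phi> :: "'a set \<Rightarrow> bool" and u :: "'i \<Rightarrow> 'a"
  assumes "finite J" "i \<notin> J" "0 \<le> p" "p \<le> 1"
  shows "measure_pmf.prob (Pi_pmf (insert i J) False (\<lambda>_. bernoulli_pmf p))
           {\<xi>. \<Phi> (u ` {j \<in> insert i J. \<xi> j})} =
           p * measure_pmf.prob (Pi_pmf J False (\<lambda>_. bernoulli_pmf p))
                 {\<xi>. \<Phi> (insert (u i) (u ` {j \<in> J. \<xi> j}))}
         + (1 - p) * measure_pmf.prob (Pi_pmf J False (\<lambda>_. bernoulli_pmf p))
                 {\<xi>. \<Phi> (u ` {j \<in> J. \<xi> j})}"
proof -
  have "{j \<in> insert i J. (\<xi>(i := b)) j} = (if b then insert i {j \<in> J. \<xi> j} else {j \<in> J. \<xi> j})"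
    for \<xi> b using assms(2) by auto
  then show ?thesis
    using prob_Pi_pmf_bernoulli_insert[OF assms] by (simp add: vimage_def)
qed

definition escapes :: "nat \<Rightarrow> ('i \<Rightarrow> 'a::field ^ 'n) \<Rightarrow> 'i set \<Rightarrow> ('a ^ 'n) set \<Rightarrow> bool" where
  "escapes m u I W \<longleftrightarrow>
     (\<forall>S. vec.subspace S \<longrightarrow> S \<noteq> UNIV \<longrightarrow> W \<subseteq> S \<longrightarrow> m \<le> card {i \<in> I. u i \<notin> S})"

lemma escapes_insert_base:
  assumes "escapes m u (insert i J) W"
  shows "escapes (m - 1) u J (insert (u i) W)"
  unfolding escapes_def
proof (intro allI impI)
  fix S assume S: "vec.subspace S" "S \<noteq> UNIV" "insert (u i) W \<subseteq> S"
  then have "{j \<in> insert i J. u j \<notin> S} = {j \<in> J. u j \<notin> S}"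
    by auto
  then show "m - 1 \<le> card {j \<in> J. u j \<notin> S}"
    using assms S unfolding escapes_def by force
qed

lemma escapes_remove:
  assumes "finite J" "escapes m u (insert i J) W"
  shows "escapes (m - 1) u J W"
  unfolding escapes_def
proof (intro allI impI)
  fix S assume S: "vec.subspace S" "S \<noteq> UNIV" "W \<subseteq> S"
  have "card {j \<in> insert i J. u j \<notin> S} \<le> card (insert i {j \<in> J. u j \<notin> S})"
    using assms(1) by (intro card_mono) auto
  also have "\<dots> \<le> Suc (card {j \<in> J. u j \<notin> S})"
    using assms(1) by (simp add: card_insert_if)
  finally show "m - 1 \<le> card {j \<in> J. u j \<notin> S}"
    using assms(2) S unfolding escapes_def by fastforce
qed

lemma escapes_span_eq_0:
  assumes "escapes m u I W" "\<And>i. i \<in> I \<Longrightarrow> u i \<in> vec.span W" "vec.span W \<noteq> UNIV"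
  shows "m = 0"
proof -
  have "{i \<in> I. u i \<notin> vec.span W} = {}"
    using assms(2) by auto
  then show ?thesis
    using assms(1,3) vec.span_superset unfolding escapes_def
    by (metis card.empty le_zero_eq vec.subspace_span)
qed

lemma span_eq_UNIV_if_dim:
  fixes W :: "('a::field ^ 'n) set"
  assumes "CARD('n) \<le> vec.dim W"
  shows "vec.span W = UNIV"
  using assms dim_subset_UNIV_cart_gen[of W] vec.dim_eq_full[of W]
  by (simp add: vec.dimension_def card_cart_basis)

text \<open>Both branches lose one escaping vector and the selected one also halves \<open>2 ^ c\<close>,
  so the bound gains the factor \<open>p / 2 + (1 - p) = 1 - p / 2\<close>.\<close>
lemma prob_span_selected_ne_UNIV_le:
  fixes u :: "'i \<Rightarrow> 'a::field ^ 'n"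
  assumes "finite I" "0 \<le> p" "p \<le> 1" "CARD('n) \<le> vec.dim W + c" "escapes m u I W"
  shows "measure_pmf.prob (Pi_pmf I False (\<lambda>_. bernoulli_pmf p))
           {\<xi>. vec.span (W \<union> u ` {i \<in> I. \<xi> i}) \<noteq> UNIV} \<le> 2 ^ c * (1 - p / 2) ^ m"
  using assms(1,4,5)
proof (induction I arbitrary: W c m rule: finite_psubset_induct)
  case (psubset I)
  let ?prob = "\<lambda>J W. measure_pmf.prob (Pi_pmf J False (\<lambda>_. bernoulli_pmf p))
                 {\<xi>. vec.span (W \<union> u ` {i \<in> J. \<xi> i}) \<noteq> UNIV}"
  show ?case
  proof (cases "\<exists>i\<in>I. u i \<notin> vec.span W")
    case True
    then obtain i where i: "i \<in> I" "u i \<notin> vec.span W"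
      by blast
    define J where "J = I - {i}"
    have I: "I = insert i J" "i \<notin> J" "finite J" "J \<subset> I"
      using i psubset.hyps by (auto simp: J_def)
    have "c \<noteq> 0"
      using psubset.prems(1) i span_eq_UNIV_if_dim[of W] by (metis UNIV_I add_0_right)
    have "?prob I W = p * ?prob J (insert (u i) W) + (1 - p) * ?prob J W"
      using prob_selected_insert[OF I(3,2) assms(2,3), of "\<lambda>X. vec.span (W \<union> X) \<noteq> UNIV" u]
      by (simp add: I(1))
    also have "\<dots> \<le> p * (2 ^ (c - 1) * (1 - p / 2) ^ (m - 1))
                   + (1 - p) * (2 ^ c * (1 - p / 2) ^ (m - 1))"
    proof (intro add_mono mult_left_mono)
      have "CARD('n) \<le> vec.dim (insert (u i) W) + (c - 1)"
        using psubset.prems(1) \<open>c \<noteq> 0\<close> i by (simp add: vec.dim_insert)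
      moreover have "escapes (m - 1) u J (insert (u i) W)"
        using psubset.prems(2) unfolding I(1) by (rule escapes_insert_base)
      ultimately show "?prob J (insert (u i) W) \<le> 2 ^ (c - 1) * (1 - p / 2) ^ (m - 1)"
        by (rule psubset.IH[OF I(4)])
      have "escapes (m - 1) u J W"
        using I(3) psubset.prems(2) unfolding I(1) by (rule escapes_remove)
      then show "?prob J W \<le> 2 ^ c * (1 - p / 2) ^ (m - 1)"
        by (rule psubset.IH[OF I(4) psubset.prems(1)])
    qed (use assms(2,3) in auto)
    also have "\<dots> = 2 ^ c * (1 - p / 2) ^ (m - 1) * (1 - p / 2)"
      using \<open>c \<noteq> 0\<close> by (cases c) (auto simp: algebra_simps)
    also have "\<dots> \<le> 2 ^ c * (1 - p / 2) ^ m"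
      using assms(2,3) by (cases m) auto
    finally show ?thesis .
  next
    case False
    then have "vec.span (W \<union> u ` {i \<in> I. \<xi> i}) = vec.span W" for \<xi>
      by (intro vec.span_eq[THEN iffD2]) (auto intro: vec.span_base)
    moreover have "m = 0" if "vec.span W \<noteq> UNIV"
      using escapes_span_eq_0[OF psubset.prems(2) _ that] False by blast
    ultimately show ?thesis
      using assms(3)
      by (cases "vec.span W = UNIV") (auto intro: measure_pmf.prob_le_1[THEN order_trans])
  qed
qed

section \<open>Orthogonal complements in \<open>\<complex>\<^sup>n\<close>\<close>

definition cinner :: "complex ^ 'n \<Rightarrow> complex ^ 'n \<Rightarrow> complex" where
  "cinner a v = (\<Sum>k\<in>UNIV. cnj (a $ k) * v $ k)"

lemma exists_linear_functional_separating:
  fixes S :: "('a::field ^ 'n) set"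
  assumes "vec.subspace S" "c \<notin> S"
  obtains g where "Vector_Spaces.linear (*s) (*) g" "g c = 1" "\<And>v. v \<in> S \<Longrightarrow> g v = 0"
proof -
  interpret pair: vector_space_pair "(*s) :: 'a \<Rightarrow> 'a ^ 'n \<Rightarrow> _" "(*)"
    by unfold_locales
  obtain B where B: "B \<subseteq> S" "vec.independent B" "S \<subseteq> vec.span B"
    using vec.maximal_independent_subset[of S] by blast
  have "vec.span B \<subseteq> S"
    using B(1) assms(1) by (rule vec.span_minimal)
  then have "vec.independent (insert c B)"
    using assms(2) B(2) by (metis subsetD vec.independent_insertI)
  from pair.linear_independent_extend[OF this, of "\<lambda>x. if x = c then 1 else 0"]
  obtain g where g: "Vector_Spaces.linear (*s) (*) g"
      "\<forall>x\<in>insert c B. g x = (if x = c then 1 else 0)"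
    by blast
  interpret g: Vector_Spaces.linear "(*s)" "(*)" g
    by (rule g(1))
  show ?thesis
  proof
    show "g c = 1"
      using g(2) by simp
    show "g v = 0" if "v \<in> S" for v
    proof (rule g.eq_0_on_span)
      show "g x = 0" if "x \<in> B" for x
        using g(2) assms(2) B(1) that by auto
      show "v \<in> vec.span B"
        using B(3) \<open>v \<in> S\<close> by blast
    qed
  qed (rule g(1))
qed

lemma linear_functional_eq_cinner:
  assumes "Vector_Spaces.linear (*s) (*) (g :: complex ^ 'n \<Rightarrow> complex)"
  shows "g v = cinner (\<chi> j. cnj (g (axis j 1))) v"
proof -
  interpret g: Vector_Spaces.linear "(*s)" "(*)" g
    by (rule assms)
  have "g v = g (\<Sum>j\<in>UNIV. v $ j *s axis j 1)"
    by (simp add: basis_expansion)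
  also have "\<dots> = cinner (\<chi> j. cnj (g (axis j 1))) v"
    by (simp add: g.sum g.scale cinner_def mult.commute)
  finally show ?thesis .
qed

lemma exists_cinner_orthogonal_to_subspace:
  fixes S :: "(complex ^ 'n) set"
  assumes "vec.subspace S" "S \<noteq> UNIV"
  obtains a where "a \<noteq> 0" "\<And>v. v \<in> S \<Longrightarrow> cinner a v = 0"
proof -
  obtain c where "c \<notin> S"
    using assms(2) by auto
  then obtain g :: "complex ^ 'n \<Rightarrow> complex" where g: "Vector_Spaces.linear (*s) (*) g" "g c = 1"
      "\<And>v. v \<in> S \<Longrightarrow> g v = 0"
    using exists_linear_functional_separating[OF assms(1)] by blast
  define a :: "complex ^ 'n" where "a = (\<chi> j. cnj (g (axis j 1)))"
  have "g v = cinner a v" for v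
    unfolding a_def by (rule linear_functional_eq_cinner[OF g(1)])
  then show ?thesis
    using g(2,3) by (intro that[of a]) (auto simp: cinner_def)
qed

section \<open>Traces against rank-one projectors\<close>

lemma power2_norm_vec: "(norm (v :: 'a :: real_normed_vector ^ 'n))\<^sup>2 = (\<Sum>i\<in>UNIV. (norm (v $ i))\<^sup>2)"
  unfolding norm_vec_def L2_set_def by (simp add: sum_nonneg)

lemma ctrace_outer: "ctrace (outer v) = of_real ((norm v)\<^sup>2)"
  by (simp add: ctrace_def outer_def power2_norm_vec flip: complex_norm_square)

lemma ctrace_outer_mult_outer: "ctrace (outer a ** outer v) = of_real ((cmod (cinner a v))\<^sup>2)"
proof -
  have "ctrace (outer a ** outer v)
      = (\<Sum>i\<in>UNIV. \<Sum>k\<in>UNIV. (a $ i * cnj (a $ k)) * (v $ k * cnj (v $ i)))"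
    by (simp add: ctrace_def matrix_matrix_mult_def outer_def)
  also have "\<dots> = cinner a v * cnj (cinner a v)"
    unfolding cinner_def
    by (simp add: sum_product sum_distrib_left sum_distrib_right mult_ac) (rule sum.swap)
  finally show ?thesis
    by (simp flip: complex_norm_square)
qed

lemma ctrace_mat_1_add_mult: "ctrace ((mat 1 + A) ** B) = ctrace B + ctrace (A ** B)"
proof -
  have "(mat 1 + A) ** B = mat 1 ** B + A ** B"
    by (simp add: matrix_matrix_mult_def vec_eq_iff sum.distrib distrib_right)
  then show ?thesis
    by (simp add: ctrace_def sum.distrib)
qed

lemma Re_ctrace_mat_1_add: "Re (ctrace (mat 1 + A :: complex ^ 'n ^ 'n)) = CARD('n) + Re (ctrace A)"
  by (simp add: ctrace_def mat_def sum.distrib)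

lemma power2_cmod_one_add: "(cmod (1 + z))\<^sup>2 = 1 + 2 * Re z + (cmod z)\<^sup>2"
  unfolding cmod_power2 by (simp add: power2_eq_square algebra_simps)

lemma frob_sq_mat_1_add:
  "frob_sq (mat 1 + A :: complex ^ 'n ^ 'n) = CARD('n) + 2 * Re (ctrace A) + frob_sq A"
proof -
  have entry: "(cmod (mat 1 $ i $ j + A $ i $ j))\<^sup>2
      = (if i = j then 1 + 2 * Re (A $ i $ i) else 0) + (cmod (A $ i $ j))\<^sup>2" for i j
    by (simp add: mat_def power2_cmod_one_add)
  have "frob_sq (mat 1 + A) = (\<Sum>i\<in>UNIV. 1 + 2 * Re (A $ i $ i)) + frob_sq A"
    by (simp only: frob_sq_def vector_add_component entry sum.distrib) (simp add: sum.distrib)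
  then show ?thesis
    by (simp add: ctrace_def sum.distrib sum_distrib_left)
qed

lemma self_adjoint_mat_1_add:
  assumes "self_adjoint A"
  shows "self_adjoint (mat 1 + A)"
  unfolding self_adjoint_def
proof (intro allI)
  fix i j
  have "cnj ((mat 1 + A) $ j $ i) = mat 1 $ i $ j + cnj (A $ j $ i)"
    by (simp add: mat_def)
  then show "(mat 1 + A) $ i $ j = cnj ((mat 1 + A) $ j $ i)"
    using assms[unfolded self_adjoint_def, rule_format, of i j] by simp
qed

lemma self_adjoint_outer: "self_adjoint (outer a)"
  by (simp add: self_adjoint_def outer_def)

lemma frob_sq_outer: "frob_sq (outer a) = (norm a)\<^sup>2 * (norm a)\<^sup>2"
  unfolding power2_norm_vec sum_product
  by (simp add: frob_sq_def outer_def norm_mult power_mult_distrib)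

section \<open>Projective 2-designs\<close>

lemma proj_2designD:
  fixes u :: "nat \<Rightarrow> complex ^ 'd"
  assumes "proj_2design n u"
  shows "0 < n" and "\<And>i. i < n \<Longrightarrow> norm (u i) = 1"
    and "\<And>M. self_adjoint M \<Longrightarrow>
           real CARD('d) * (real CARD('d) + 1) * (\<Sum>i<n. (cmod (ctrace (M ** outer (u i))))\<^sup>2)
           = real n * (frob_sq M + (Re (ctrace M))\<^sup>2)"
proof -
  show "0 < n" "\<And>i. i < n \<Longrightarrow> norm (u i) = 1"
    using assms by (auto simp: proj_2design_def)
  fix M :: "complex ^ 'd ^ 'd"
  let ?D = "real CARD('d) * (real CARD('d) + 1)"
  let ?X = "\<Sum>i<n. (cmod (ctrace (M ** outer (u i))))\<^sup>2"
  assume "self_adjoint M"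
  then have "(1 / real n) * ?X = (frob_sq M + (Re (ctrace M))\<^sup>2) / ?D"
    using assms unfolding proj_2design_def by blast
  then have "?X / real n = (frob_sq M + (Re (ctrace M))\<^sup>2) / ?D"
    by simp
  moreover have "real n \<noteq> 0" "?D \<noteq> 0"
    using \<open>0 < n\<close> by auto
  ultimately have "?X * ?D = (frob_sq M + (Re (ctrace M))\<^sup>2) * real n"
    by (metis frac_eq_eq)
  then show "?D * ?X = real n * (frob_sq M + (Re (ctrace M))\<^sup>2)"
    by (simp only: mult.commute)
qed

text \<open>Polarising the design identity between \<open>A\<close> and \<open>mat 1 + A\<close> shows that a 2-design
  is a 1-design.\<close>
lemma proj_2design_sum_Re_ctrace:
  fixes u :: "nat \<Rightarrow> complex ^ 'd"
  assumes design: "proj_2design n u" and A: "self_adjoint A"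
  shows "(\<Sum>i<n. Re (ctrace (A ** outer (u i)))) = real n * Re (ctrace A) / CARD('d)"
proof -
  define z where "z i = ctrace (A ** outer (u i))" for i
  define d where "d = real CARD('d)"
  define t where "t = Re (ctrace A)"
  define S where "S = (\<Sum>i<n. Re (z i))"
  define Q where "Q = (\<Sum>i<n. (cmod (z i))\<^sup>2)"
  have "ctrace ((mat 1 + A) ** outer (u i)) = 1 + z i" if "i < n" for i
    using proj_2designD(2)[OF design that] by (simp add: ctrace_mat_1_add_mult ctrace_outer z_def)
  then have "(\<Sum>i<n. (cmod (ctrace ((mat 1 + A) ** outer (u i))))\<^sup>2) = (\<Sum>i<n. (cmod (1 + z i))\<^sup>2)"
    by (intro sum.cong) simp_all
  also have "\<dots> = real n + 2 * S + Q"
    by (simp add: S_def Q_def power2_cmod_one_add sum.distrib sum_distrib_left)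
  finally have "d * (d + 1) * (real n + 2 * S + Q)
      = real n * (frob_sq (mat 1 + A) + (Re (ctrace (mat 1 + A)))\<^sup>2)"
    using proj_2designD(3)[OF design self_adjoint_mat_1_add[OF A]] by (simp only: d_def)
  then have "d * (d + 1) * (real n + 2 * S + Q) = real n * (d + 2 * t + frob_sq A + (d + t)\<^sup>2)"
    by (simp only: frob_sq_mat_1_add Re_ctrace_mat_1_add d_def t_def)
  moreover have "d * (d + 1) * Q = real n * (frob_sq A + t\<^sup>2)"
    using proj_2designD(3)[OF design A] by (simp add: z_def d_def t_def Q_def)
  ultimately have "(d + 1) * (d * S) = (d + 1) * (real n * t)"
    by algebra
  then have "d * S = real n * t"
    by (simp add: d_def)
  then show ?thesis
    by (simp add: S_def z_def t_def d_def field_simps)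
qed

lemma sum_power2_le_card_support:
  fixes f :: "'a \<Rightarrow> real"
  assumes "finite I"
  shows "(\<Sum>i\<in>I. f i)\<^sup>2 \<le> card {i \<in> I. f i \<noteq> 0} * (\<Sum>i\<in>I. (f i)\<^sup>2)"
proof -
  have "(\<Sum>i\<in>I. f i) = (\<Sum>i\<in>{i \<in> I. f i \<noteq> 0}. f i)"
    "(\<Sum>i\<in>I. (f i)\<^sup>2) = (\<Sum>i\<in>{i \<in> I. f i \<noteq> 0}. (f i)\<^sup>2)"
    using assms by (auto intro: sum.mono_neutral_right)
  then show ?thesis
    using sum_squared_le_sum_of_squares[of f "{i \<in> I. f i \<noteq> 0}"] by (simp add: mult.commute)
qed

text \<open>Cauchy--Schwarz between the first and second moments of \<open>|\<langle>a, u\<^sub>i\<rangle>|\<^sup>2\<close>.\<close>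
lemma proj_2design_card_not_orthogonal:
  fixes u :: "nat \<Rightarrow> complex ^ 'd"
  assumes design: "proj_2design n u" and "a \<noteq> 0"
  shows "real n * (real CARD('d) + 1)
           \<le> 2 * real CARD('d) * real (card {i \<in> {..<n}. cinner a (u i) \<noteq> 0})"
proof -
  define g where "g i = (cmod (cinner a (u i)))\<^sup>2" for i
  define N where "N = (norm a)\<^sup>2"
  define d where "d = real CARD('d)"
  define K where "K = real (card {i \<in> {..<n}. cinner a (u i) \<noteq> 0})"
  have "N > 0" "d > 0" "real n > 0"
    using \<open>a \<noteq> 0\<close> proj_2designD(1)[OF design] by (auto simp: N_def d_def)
  have "(\<Sum>i<n. g i) = real n * N / d"
    using proj_2design_sum_Re_ctrace[OF design self_adjoint_outer[of a]]
    by (simp add: g_def N_def d_def ctrace_outer_mult_outer ctrace_outer)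
  then have first: "d * (\<Sum>i<n. g i) = real n * N"
    using \<open>d > 0\<close> by simp
  have "cmod (ctrace (outer a ** outer (u i))) = g i" for i
    unfolding ctrace_outer_mult_outer norm_of_real g_def by simp
  then have second: "d * (d + 1) * (\<Sum>i<n. (g i)\<^sup>2) = real n * (2 * N\<^sup>2)"
    using proj_2designD(3)[OF design self_adjoint_outer[of a]]
    by (simp add: N_def d_def ctrace_outer frob_sq_outer power2_eq_square)
  have "{i \<in> {..<n}. g i \<noteq> 0} = {i \<in> {..<n}. cinner a (u i) \<noteq> 0}"
    by (simp add: g_def)
  then have CS: "(\<Sum>i<n. g i)\<^sup>2 \<le> K * (\<Sum>i<n. (g i)\<^sup>2)"
    using sum_power2_le_card_support[of "{..<n}" g] by (simp add: K_def)
  have "(real n * N\<^sup>2) * (real n * (d + 1)) = (d * (\<Sum>i<n. g i))\<^sup>2 * (d + 1)"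
    unfolding first by (simp add: power2_eq_square mult_ac)
  also have "\<dots> = d\<^sup>2 * (d + 1) * (\<Sum>i<n. g i)\<^sup>2"
    by (simp add: power_mult_distrib mult_ac)
  also have "\<dots> \<le> d\<^sup>2 * (d + 1) * (K * (\<Sum>i<n. (g i)\<^sup>2))"
    using CS \<open>d > 0\<close> by (intro mult_left_mono) auto
  also have "\<dots> = K * d * (d * (d + 1) * (\<Sum>i<n. (g i)\<^sup>2))"
    by (simp add: power2_eq_square mult_ac)
  also have "\<dots> = (real n * N\<^sup>2) * (2 * d * K)"
    unfolding second by (simp add: mult_ac)
  finally have "real n * (d + 1) \<le> 2 * d * K"
    using \<open>N > 0\<close> \<open>real n > 0\<close> by (simp add: mult_le_cancel_left_pos)
  then show ?thesis
    by (simp add: d_def K_def)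
qed

lemma proj_2design_card_outside_subspace:
  fixes u :: "nat \<Rightarrow> complex ^ 'd"
  assumes design: "proj_2design n u" and "vec.subspace S" "S \<noteq> UNIV"
  shows "real n \<le> 2 * real (card {i \<in> {..<n}. u i \<notin> S})"
proof -
  obtain a where "a \<noteq> 0" and a: "\<And>v. v \<in> S \<Longrightarrow> cinner a v = 0"
    using exists_cinner_orthogonal_to_subspace assms(2,3) by blast
  have "card {i \<in> {..<n}. cinner a (u i) \<noteq> 0} \<le> card {i \<in> {..<n}. u i \<notin> S}"
    using a by (intro card_mono) auto
  then have "real CARD('d) * real n \<le> real n * (real CARD('d) + 1)"
    "2 * real CARD('d) * card {i \<in> {..<n}. cinner a (u i) \<noteq> 0}
       \<le> real CARD('d) * (2 * card {i \<in> {..<n}. u i \<notin> S})"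
    by (simp_all add: algebra_simps)
  then have "real CARD('d) * real n \<le> real CARD('d) * (2 * card {i \<in> {..<n}. u i \<notin> S})"
    using proj_2design_card_not_orthogonal[OF design \<open>a \<noteq> 0\<close>] by linarith
  then show ?thesis
    by (simp add: mult_le_cancel_left_pos)
qed

lemma one_minus_power_le_exp:
  fixes x :: real
  assumes "x \<le> 1"
  shows "(1 - x) ^ m \<le> exp (- x * m)"
proof -
  have "(1 - x) ^ m \<le> exp (- x) ^ m"
    using assms exp_ge_add_one_self[of "- x"] by (intro power_mono) auto
  then show ?thesis
    by (simp add: mult.commute flip: exp_of_nat_mult)
qed

lemma proj_2design_prob_not_spanning_le:
  fixes u :: "nat \<Rightarrow> complex ^ 'd"
  assumes design: "proj_2design n u" and "0 \<le> s" "s \<le> real n"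
  shows "measure_pmf.prob (Pi_pmf {..<n} False (\<lambda>_. bernoulli_pmf (s / real n)))
           {\<xi>. vec.span (u ` {i \<in> {..<n}. \<xi> i}) \<noteq> UNIV} \<le> 2 ^ CARD('d) * exp (- s / 4)"
proof -
  define p where "p = s / real n"
  define m where "m = nat \<lceil>real n / 2\<rceil>"
  have "0 < real n"
    using proj_2designD(1)[OF design] by simp
  then have p: "0 \<le> p" "p \<le> 1"
    using assms(2,3) by (auto simp: p_def)
  have "measure_pmf.prob (Pi_pmf {..<n} False (\<lambda>_. bernoulli_pmf p))
          {\<xi>. vec.span ({} \<union> u ` {i \<in> {..<n}. \<xi> i}) \<noteq> UNIV} \<le> 2 ^ CARD('d) * (1 - p / 2) ^ m"
  proof (rule prob_span_selected_ne_UNIV_le)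
    show "escapes m u {..<n} {}"
      unfolding escapes_def
    proof (intro allI impI)
      fix S :: "(complex ^ 'd) set"
      assume "vec.subspace S" "S \<noteq> UNIV"
      then have "real n / 2 \<le> card {i \<in> {..<n}. u i \<notin> S}"
        using proj_2design_card_outside_subspace[OF design] by fastforce
      then show "m \<le> card {i \<in> {..<n}. u i \<notin> S}"
        by (simp add: m_def nat_le_iff ceiling_le_iff)
    qed
  qed (use p in auto)
  also have "(1 - p / 2) ^ m \<le> exp (- (p / 2) * m)"
    using p by (intro one_minus_power_le_exp) auto
  also have "\<dots> \<le> exp (- s / 4)"
  proof -
    have "real n / 2 \<le> m"
      by (simp add: m_def)
    then have "s * real n \<le> s * (2 * m)"
      using assms(2) by (intro mult_left_mono) auto
    then have "s / 4 \<le> p / 2 * m"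
      using \<open>0 < real n\<close> by (simp add: p_def field_simps)
    then show ?thesis
      by simp
  qed
  finally show ?thesis
    by (simp add: p_def mult_left_mono)
qed

lemma two_pow_mul_exp_le:
  fixes s \<delta> :: real
  assumes "1 \<le> d" "0 < \<delta>" "\<delta> < 1"
    and "4 * (sqrt (real d) + sqrt (ln (real d / \<delta>)))\<^sup>2 \<le> s"
  shows "2 ^ d * exp (- s / 4) \<le> \<delta>"
proof -
  have "0 \<le> ln (real d / \<delta>)"
    using assms(1-3) by simp
  then have "real d + ln (real d / \<delta>) \<le> (sqrt (real d) + sqrt (ln (real d / \<delta>)))\<^sup>2"
    by (simp add: power2_sum)
  moreover have "ln (real d / \<delta>) = ln (real d) - ln \<delta>" "0 \<le> ln (real d)"
    using assms(1,2) by (simp_all add: ln_div)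
  moreover have "real d * ln 2 \<le> real d"
    using ln_2_less_1 by (simp add: mult_left_le)
  ultimately have "real d * ln 2 - s / 4 \<le> ln \<delta>"
    using assms(4) by linarith
  then have "exp (real d * ln 2 - s / 4) \<le> \<delta>"
    using assms(2) by (metis exp_le_cancel_iff exp_ln)
  moreover have "exp (real d * ln 2) = 2 ^ d"
    by (simp add: exp_of_nat_mult)
  then have "exp (real d * ln 2 - s / 4) = 2 ^ d * exp (- s / 4)"
    using exp_add[of "real d * ln 2" "- s / 4"] by simp
  ultimately show ?thesis
    by simp
qed

theorem theorem4p2:
  fixes u :: "nat \<Rightarrow> complex ^ 'd" and n :: nat and s \<delta> :: real
  assumes design: "proj_2design n u"
    and s_range: "1 \<le> s" "s \<le> real n"
    and delta: "0 < \<delta>" "\<delta> < 1"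
    and s_big: "s \<ge> 4 * (sqrt (real CARD('d)) + sqrt (ln (real CARD('d) / \<delta>)))\<^sup>2"
  shows "measure_pmf.prob (Pi_pmf {..<n} False (\<lambda>_. bernoulli_pmf (s / real n)))
           {\<xi>. spans_Cd {u i | i. i < n \<and> \<xi> i}} \<ge> 1 - \<delta>"
proof -
  let ?P = "Pi_pmf {..<n} False (\<lambda>_. bernoulli_pmf (s / real n))"
  let ?F = "{\<xi>. vec.span (u ` {i \<in> {..<n}. \<xi> i}) \<noteq> UNIV}"
  have "measure_pmf.prob ?P ?F \<le> 2 ^ CARD('d) * exp (- s / 4)"
    using proj_2design_prob_not_spanning_le[OF design] s_range by simp
  also have "\<dots> \<le> \<delta>"
    using two_pow_mul_exp_le[of "CARD('d)"] delta s_big by simp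
  finally have "measure_pmf.prob ?P ?F \<le> \<delta>" .
  moreover have "{u i | i. i < n \<and> \<xi> i} = u ` {i \<in> {..<n}. \<xi> i}" for \<xi>
    by auto
  then have "{\<xi>. spans_Cd {u i | i. i < n \<and> \<xi> i}} = UNIV - ?F"
    unfolding spans_Cd_def by auto
  ultimately show ?thesis
    using measure_pmf.prob_compl[of ?F ?P] by simp
qed

end
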